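(* Let $A$ be a linearly ordered set. Then for all passable games $G,H$ over $A$, we have $G\lhd H$ or $H\le G$.
   Context: Games over a poset $A$ are defined inductively: for each $a\in A$ there is an atomic game $[a]$, which has no options; and if $L$ and $R$ are non-empty sets of games, then $\{L\mid R\}$ is a composite game with left options $L$ and right options $R$. The relations $\le$ and $\lhd$ are defined by simultaneous recursion: $G\le H$ iff (1) every left option $G^L$ of $G$ satisfies $G^L\lhd H$, (2) every right option $H^R$ of $H$ satisfies $G\lhd H^R$, and (3) if $G$ or $H$ is atomic then $G\lhd H$; and $G\lhd H$ iff (1) some right option $G^R$ of $G$ satisfies $G^R\le H$, or (2) some left option $H^L$ of $H$ satisfies $G\le H^L$, or (3) $G=[a]$, $H=[b]$ are atomic and $a\le b$. A game $G$ is passable if $G\lhd G$ and recursively all its options are passable. *)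

theory Defs
  imports Main
begin

text \<open>A composite game carries its (non-empty) sets of
left and right options as the ranges of families indexed by a type 'i; since every
type is non-empty these ranges are automatically non-empty, and every non-empty set
of games of cardinality at most |'i| arises this way.  As 'i is arbitrary, all games
are covered.\<close>

datatype ('a, 'i) game = Atom 'a | Comp "'i \<Rightarrow> ('a, 'i) game" "'i \<Rightarrow> ('a, 'i) game"

fun lopts :: "('a, 'i) game \<Rightarrow> ('a, 'i) game set" where
  "lopts (Atom a) = {}"
| "lopts (Comp L R) = range L"

fun ropts :: "('a, 'i) game \<Rightarrow> ('a, 'i) game set" where
  "ropts (Atom a) = {}"
| "ropts (Comp L R) = range R"

fun is_atom :: "('a, 'i) game \<Rightarrow> bool" where
  "is_atom (Atom a) = True"
| "is_atom (Comp L R) = False"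

text \<open>The simultaneous recursion defining \<le> and \<lhd>; the recursion is well-founded,
so the inductive (least fixed point) definition coincides with it.\<close>

inductive game_le :: "('a::order, 'i) game \<Rightarrow> ('a, 'i) game \<Rightarrow> bool"
      and game_lf :: "('a::order, 'i) game \<Rightarrow> ('a, 'i) game \<Rightarrow> bool"
where
  le_intro: "\<lbrakk> \<forall>GL\<in>lopts G. game_lf GL H;
              \<forall>HR\<in>ropts H. game_lf G HR;
              (is_atom G \<or> is_atom H) \<longrightarrow> game_lf G H \<rbrakk> \<Longrightarrow> game_le G H"
| lf_right: "\<lbrakk> GR \<in> ropts G; game_le GR H \<rbrakk> \<Longrightarrow> game_lf G H"
| lf_left: "\<lbrakk> HL \<in> lopts H; game_le G HL \<rbrakk> \<Longrightarrow> game_lf G H"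
| lf_atom: "a \<le> b \<Longrightarrow> game_lf (Atom a) (Atom b)"

inductive passable :: "('a::order, 'i) game \<Rightarrow> bool" where
  "\<lbrakk> game_lf G G; \<forall>G'\<in>lopts G \<union> ropts G. passable G' \<rbrakk> \<Longrightarrow> passable G"

end

theory Submission
  imports Defs
begin

text \<open>Both \<open>G \<lhd> H \<or> H \<le> G\<close> and \<open>H \<lhd> G \<or> G \<le> H\<close> are proved together by induction
on the two passable games.  If \<open>G \<lhd> H\<close> fails, then no \<open>G \<le> H\<^sup>L\<close> and no \<open>G\<^sup>R \<le> H\<close> can
hold, so the induction hypothesis yields \<open>H\<^sup>L \<lhd> G\<close> and \<open>H \<lhd> G\<^sup>R\<close>, the option clauses
of \<open>H \<le> G\<close>.  The remaining clause, \<open>H \<lhd> G\<close> when one side is atomic, say \<open>H = [b]\<close>,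
is where passability enters: \<open>G \<lhd> G\<close> gives \<open>G\<^sup>R \<le> G\<close> or \<open>G \<le> G\<^sup>L\<close>, and transitivity
through the atom \<open>[b]\<close> turns the induction hypothesis for that option into \<open>[b] \<lhd> G\<close>.
Linearity of the order is needed only when both games are atoms.\<close>

lemma Atom_lf_Atom_iff [simp]: "game_lf (Atom a) (Atom b :: ('a::order, 'i) game) \<longleftrightarrow> a \<le> b"
  by (auto simp: game_lf.simps)

lemma Atom_lf_Comp_iff: "game_lf (Atom b) (Comp L R) \<longleftrightarrow> (\<exists>i. game_le (Atom b) (L i))"
  by (auto simp: game_lf.simps)

lemma Comp_lf_Atom_iff: "game_lf (Comp L R) (Atom b) \<longleftrightarrow> (\<exists>i. game_le (R i) (Atom b))"
  by (auto simp: game_lf.simps)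

lemma Atom_le_iff:
  "game_le (Atom b) H \<longleftrightarrow> game_lf (Atom b) H \<and> (\<forall>HR\<in>ropts H. game_lf (Atom b) HR)"
  by (auto simp: game_le.simps)

lemma le_Atom_iff:
  "game_le G (Atom b) \<longleftrightarrow> game_lf G (Atom b) \<and> (\<forall>GL\<in>lopts G. game_lf GL (Atom b))"
  by (auto simp: game_le.simps)

lemma Comp_lf_self_cases:
  assumes "game_lf (Comp L R) (Comp L R)"
  obtains i where "game_le (R i) (Comp L R)" | i where "game_le (Comp L R) (L i)"
  using assms by (auto simp: game_lf.simps)

lemma Atom_lf_le_trans_mutual:
  fixes Y Z :: "('a::order, 'i) game"
  shows "game_le Y Z \<Longrightarrow>
           (game_le (Atom b) Y \<longrightarrow> game_le (Atom b) Z) \<and> (game_lf (Atom b) Y \<longrightarrow> game_lf (Atom b) Z)"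
    and "game_lf Y Z \<Longrightarrow> game_le (Atom b) Y \<longrightarrow> game_lf (Atom b) Z"
proof (induct rule: game_le_game_lf.inducts)
  case (le_intro G H)
  have "game_lf (Atom b) H" if "game_lf (Atom b) G"
  proof (cases G)
    case (Atom a)
    then show ?thesis using that le_intro(3) by (simp add: Atom_le_iff)
  next
    case (Comp L R)
    then show ?thesis using that le_intro(1) by (auto simp: Atom_lf_Comp_iff)
  qed
  then show ?case using le_intro(2) by (auto simp: Atom_le_iff)
next
  case (lf_right GR G H)
  then show ?case using Atom_le_iff by blast
next
  case (lf_left HL H G)
  then show ?case using game_le_game_lf.lf_left by blast
next
  case (lf_atom a c)
  then show ?case by (auto simp: Atom_le_iff)
qed

lemma lf_Atom_le_trans_mutual:
  fixes Y Z :: "('a::order, 'i) game"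
  shows "game_le Y Z \<Longrightarrow>
           (game_le Z (Atom b) \<longrightarrow> game_le Y (Atom b)) \<and> (game_lf Z (Atom b) \<longrightarrow> game_lf Y (Atom b))"
    and "game_lf Y Z \<Longrightarrow> game_le Z (Atom b) \<longrightarrow> game_lf Y (Atom b)"
proof (induct rule: game_le_game_lf.inducts)
  case (le_intro G H)
  have "game_lf G (Atom b)" if "game_lf H (Atom b)"
  proof (cases H)
    case (Atom a)
    then show ?thesis using that le_intro(3) by (simp add: le_Atom_iff)
  next
    case (Comp L R)
    then show ?thesis using that le_intro(2) by (auto simp: Comp_lf_Atom_iff)
  qed
  then show ?case using le_intro(1) by (auto simp: le_Atom_iff)
next
  case (lf_right GR G H)
  then show ?case using game_le_game_lf.lf_right by blast
next
  case (lf_left HL H G)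
  then show ?case using le_Atom_iff by blast
next
  case (lf_atom a c)
  then show ?case by (auto simp: le_Atom_iff)
qed

lemma Atom_lf_le_trans: "game_lf (Atom b) G \<Longrightarrow> game_le G H \<Longrightarrow> game_lf (Atom b) H"
  using Atom_lf_le_trans_mutual(1) by blast

lemma le_lf_Atom_trans: "game_le G H \<Longrightarrow> game_lf H (Atom b) \<Longrightarrow> game_lf G (Atom b)"
  using lf_Atom_le_trans_mutual(1) by blast

lemma lf_Atom_or_Atom_lf:
  fixes G :: "('a::linorder, 'i) game"
  assumes "game_lf G G"
    and "\<forall>GR\<in>ropts G. game_lf (Atom b) GR \<or> game_le GR (Atom b)"
    and "\<forall>GL\<in>lopts G. game_lf GL (Atom b) \<or> game_le (Atom b) GL"
  shows "game_lf G (Atom b) \<or> game_lf (Atom b) G"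
proof (cases G)
  case (Atom a)
  then show ?thesis by auto
next
  case (Comp L R)
  with assms(1) have "game_lf (Comp L R) (Comp L R)" by simp
  then show ?thesis
  proof (cases rule: Comp_lf_self_cases)
    case (1 i)
    have "game_lf (Atom b) (R i) \<or> game_le (R i) (Atom b)" using assms(2) Comp by simp
    then show ?thesis using 1 Comp by (metis Atom_lf_le_trans Comp_lf_Atom_iff)
  next
    case (2 i)
    have "game_lf (L i) (Atom b) \<or> game_le (Atom b) (L i)" using assms(3) Comp by simp
    then show ?thesis using 2 Comp by (metis le_lf_Atom_trans Atom_lf_Comp_iff)
  qed
qed

lemma lf_or_le_if_options_lf_or_le:
  fixes G H :: "('a::linorder, 'i) game"
  assumes "game_lf G G" and "game_lf H H"
    and "\<forall>HL\<in>lopts H. game_lf HL G \<or> game_le G HL"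
    and "\<forall>GR\<in>ropts G. game_lf H GR \<or> game_le GR H"
    and "\<forall>GL\<in>lopts G. game_lf GL H \<or> game_le H GL"
    and "\<forall>HR\<in>ropts H. game_lf G HR \<or> game_le HR G"
  shows "game_lf G H \<or> game_le H G"
proof (cases "game_lf G H")
  case not_lf: False
  have "game_le H G"
  proof (rule le_intro)
    show "\<forall>HL\<in>lopts H. game_lf HL G" using assms(3) not_lf lf_left by blast
    show "\<forall>GR\<in>ropts G. game_lf H GR" using assms(4) not_lf lf_right by blast
    show "is_atom H \<or> is_atom G \<longrightarrow> game_lf H G"
    proof (intro impI, elim disjE)
      assume "is_atom H"
      then obtain b where "H = Atom b" by (cases H) auto
      then show "game_lf H G" using lf_Atom_or_Atom_lf[of G b] assms(1,4,5) not_lf by auto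
    next
      assume "is_atom G"
      then obtain a where "G = Atom a" by (cases G) auto
      then show "game_lf H G" using lf_Atom_or_Atom_lf[of H a] assms(2,3,6) not_lf by auto
    qed
  qed
  then show ?thesis ..
qed simp

lemma passable_lf_or_le_both_ways:
  fixes G H :: "('a::linorder, 'i) game"
  assumes "passable G" and "passable H"
  shows "(game_lf G H \<or> game_le H G) \<and> (game_lf H G \<or> game_le G H)"
  using assms
proof (induction G arbitrary: H rule: passable.induct)
  case (1 G)
  note G_lf_G = 1(1) and IH_G = 1(2)
  from \<open>passable H\<close> show ?case
  proof (induction H rule: passable.induct)
    case (1 H)
    have "passable H" using 1 by (auto intro: passable.intros)
    have "\<forall>GL\<in>lopts G. game_lf GL H \<or> game_le H GL"
      and "\<forall>GR\<in>ropts G. game_lf H GR \<or> game_le GR H"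
      using IH_G \<open>passable H\<close> by blast+
    moreover have "\<forall>HL\<in>lopts H. game_lf HL G \<or> game_le G HL"
      and "\<forall>HR\<in>ropts H. game_lf G HR \<or> game_le HR G"
      using 1(2) by blast+
    ultimately show ?case
      using lf_or_le_if_options_lf_or_le[of G H] lf_or_le_if_options_lf_or_le[of H G] G_lf_G 1(1) by blast
  qed
qed

theorem lemma7p2:
  fixes G H :: "('a::linorder, 'i) game"
  assumes "passable G" and "passable H"
  shows "game_lf G H \<or> game_le H G"
  using passable_lf_or_le_both_ways[OF assms] by blast

end
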